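(* Let $A_1,B_3,A_2,B_1,A_3,B_2$ be six points lying on a (nondegenerate) conic, taken as the vertices, in this order, of the inscribed hexagon $A_1B_3A_2B_1A_3B_2$, in general position so that the points below are well defined. For every permutation $(i,j,k)$ of $(1,2,3)$ let $Q_{ij}$ be the intersection point of the lines $A_iB_k$ and $B_jA_k$. Then the three lines $Q_{12}Q_{21}$, $Q_{13}Q_{31}$ and $Q_{23}Q_{32}$ pass through a common point.
   Context: Points and lines are in the real projective plane. *)

theory Defs
  imports "HOL-Analysis.Analysis"
begin

text \<open>Real projective plane in homogeneous coordinates: a point (or a line) is represented
by a nonzero vector of real^3, up to nonzero scaling. Point p lies on line l iff p \<bullet> l = 0.\<close>

definition proj_point :: "real^3 \<Rightarrow> bool" where
  "proj_point p \<longleftrightarrow> p \<noteq> 0"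

definition same_point :: "real^3 \<Rightarrow> real^3 \<Rightarrow> bool" where
  "same_point p q \<longleftrightarrow> cross3 p q = 0"

definition incident :: "real^3 \<Rightarrow> real^3 \<Rightarrow> bool" where
  "incident p l \<longleftrightarrow> p \<bullet> l = 0"

definition join :: "real^3 \<Rightarrow> real^3 \<Rightarrow> real^3" where
  "join p q = cross3 p q"

definition meet :: "real^3 \<Rightarrow> real^3 \<Rightarrow> real^3" where
  "meet l m = cross3 l m"

definition nondeg_conic :: "real^3^3 \<Rightarrow> bool" where
  "nondeg_conic M \<longleftrightarrow> transpose M = M \<and> det M \<noteq> 0"

definition on_conic :: "real^3^3 \<Rightarrow> real^3 \<Rightarrow> bool" where
  "on_conic M p \<longleftrightarrow> p \<bullet> (M *v p) = 0"

definition concurrent :: "real^3 \<Rightarrow> real^3 \<Rightarrow> real^3 \<Rightarrow> bool" where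
  "concurrent l m n \<longleftrightarrow> (\<exists>p. proj_point p \<and> incident p l \<and> incident p m \<and> incident p n)"

definition Qpt :: "(nat \<Rightarrow> real^3) \<Rightarrow> (nat \<Rightarrow> real^3) \<Rightarrow> nat \<Rightarrow> nat \<Rightarrow> nat \<Rightarrow> real^3" where
  "Qpt A B i j k = meet (join (A i) (B k)) (join (B j) (A k))"

end

theory Submission
  imports Defs
begin

(* A nondegenerate conic with a marked point P is the image, under an invertible linear map T
   sending (1,0,0) to P, of the standard conic y^2 = x z, whose other points are (t^2, t, 1).
   Joins and meets of images under T are images under the cofactor matrix of T, so the
   determinant of the three lines Q_ij Q_ji changes only by a scalar factor.  With A_1 moved
   to (1,0,0) and the remaining five points written as (t^2, t, 1), that determinant is a
   polynomial in five parameters which vanishes identically. *)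

definition cofactor_matrix :: "real^3^3 \<Rightarrow> real^3^3" where
  "cofactor_matrix T = transpose (vector
     [cross3 (column 2 T) (column 3 T), cross3 (column 3 T) (column 1 T),
      cross3 (column 1 T) (column 2 T)])"

lemma cross3_matrix_vector_mult:
  "cross3 (T *v x) (T *v y) = cofactor_matrix T *v cross3 x y"
  unfolding cofactor_matrix_def
  by (simp add: vec_eq_iff forall_3 cross3_simps matrix_vector_mult_def transpose_def column_def)

lemma dot_cross3_matrix_vector_mult:
  "(T *v x) \<bullet> cross3 (T *v y) (T *v z) = det T * (x \<bullet> cross3 y z)"
proof -
  have "(T *v x) \<bullet> cross3 (T *v y) (T *v z) = x \<bullet> (transpose T *v cross3 (T *v y) (T *v z))"
    by (metis dot_lmul_matrix vector_transpose_matrix)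
  also have "\<dots> = x \<bullet> (det T *\<^sub>R cross3 y z)"
    by (simp only: cross_matrix_mult)
  finally show ?thesis by simp
qed

lemma transpose_vector_mult:
  "transpose (vector [u, v, w] :: real^3^3) *v x = x$1 *\<^sub>R u + x$2 *\<^sub>R v + x$3 *\<^sub>R w"
  by (simp add: vec_eq_iff forall_3 matrix_vector_mult_def transpose_def sum_3 mult.commute)

lemma det_transpose_vector:
  "det (transpose (vector [u, v, w] :: real^3^3)) = u \<bullet> cross3 v w"
  by (simp add: det_transpose dot_cross_det)

lemma inner_symmetric_matrix_vector_mult:
  fixes M :: "real^'n^'n"
  assumes "transpose M = M"
  shows "x \<bullet> (M *v y) = y \<bullet> (M *v x)"
  by (metis assms dot_lmul_matrix inner_commute vector_transpose_matrix)

lemma cross3_dot_cross3: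
  "cross3 a b \<bullet> cross3 c d = (a \<bullet> c) * (b \<bullet> d) - (a \<bullet> d) * (b \<bullet> c)"
  by (simp add: cross3_simps)

lemma cross3_cross3_left:
  "cross3 (cross3 a b) c = (a \<bullet> c) *\<^sub>R b - (b \<bullet> c) *\<^sub>R a"
  by (simp add: cross3_simps forall_3)

lemma cross3_eq_0_trans:
  assumes "n \<noteq> 0" "cross3 n y = 0" "cross3 n z = 0"
  shows "cross3 y z = 0"
  using assms collinear_3_trans[of y 0 n z] unfolding cross_eq_0
  by (metis insert_commute)

lemma symmetric_matrix_vector_mult_cross3:
  fixes M :: "real^3^3"
  assumes "transpose M = M"
  shows "M *v cross3 (M *v x) (M *v y) = det M *\<^sub>R cross3 x y"
  using cross_matrix_mult[of M x y] assms by simp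

lemma nondeg_conic_distinct_points_not_conjugate:
  assumes conic: "nondeg_conic M" and P: "on_conic M P" and R: "on_conic M R"
    and PR: "\<not> same_point P R"
  shows "P \<bullet> (M *v R) \<noteq> 0"
proof
  assume c: "P \<bullet> (M *v R) = 0"
  have sym: "transpose M = M" and dM: "det M \<noteq> 0"
    using conic by (auto simp: nondeg_conic_def)
  have n: "cross3 P R \<noteq> 0"
    using PR by (simp add: same_point_def)
  have "R \<bullet> (M *v P) = 0"
    using c inner_symmetric_matrix_vector_mult[OF sym] by metis
  then have "cross3 (cross3 P R) (M *v P) = 0" "cross3 (cross3 P R) (M *v R) = 0"
    using P R c by (simp_all add: on_conic_def cross3_cross3_left)
  with n have "cross3 (M *v P) (M *v R) = 0"
    by (rule cross3_eq_0_trans)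
  then have "det M *\<^sub>R cross3 P R = 0"
    using symmetric_matrix_vector_mult_cross3[OF sym, of P R] by simp
  then show False
    using dM n by simp
qed

text \<open>The vector X below is the pole of the line PR.\<close>

lemma quadratic_form_pole_frame:
  fixes M :: "real^3^3"
  assumes sym: "transpose M = M" and P: "on_conic M P" and R: "on_conic M R"
  defines "X \<equiv> cross3 (M *v P) (M *v R)"
  shows "(w1 *\<^sub>R P + w2 *\<^sub>R X + w3 *\<^sub>R R) \<bullet> (M *v (w1 *\<^sub>R P + w2 *\<^sub>R X + w3 *\<^sub>R R))
    = 2 * (P \<bullet> (M *v R)) * w1 * w3 + (X \<bullet> (M *v X)) * w2\<^sup>2"
proof -
  have "R \<bullet> (M *v P) = P \<bullet> (M *v R)"
    by (rule inner_symmetric_matrix_vector_mult[OF sym])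
  moreover have "X \<bullet> (M *v P) = 0" "X \<bullet> (M *v R) = 0"
    unfolding X_def by (simp_all add: dot_cross_self)
  moreover have "P \<bullet> (M *v X) = 0" "R \<bullet> (M *v X) = 0"
    unfolding X_def symmetric_matrix_vector_mult_cross3[OF sym] by (simp_all add: dot_cross_self)
  ultimately show ?thesis
    using P R
    by (simp add: on_conic_def matrix_vector_right_distrib matrix_vector_mult_scaleR inner_add_left
        inner_add_right inner_commute[of _ "M *v _"] algebra_simps power2_eq_square)
qed

lemma nondeg_conic_normal_form:
  assumes conic: "nondeg_conic M" and P: "on_conic M P" and R: "on_conic M R"
    and PR: "\<not> same_point P R"
  obtains T where "invertible T" "T *v vector [1, 0, 0] = P"
    "\<And>v :: real^3. on_conic M (T *v v) \<longleftrightarrow> (v$2)\<^sup>2 = v$1 * v$3"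
proof -
  have sym: "transpose M = M" and dM: "det M \<noteq> 0"
    using conic by (auto simp: nondeg_conic_def)
  define c where "c = P \<bullet> (M *v R)"
  define X where "X = cross3 (M *v P) (M *v R)"
  define d where "d = X \<bullet> (M *v X)"
  \<comment> \<open>Rescaling R by \<mu> turns the form 2 c w1 w3 + d w2^2 into d (w2^2 - w1 w3).\<close>
  define \<mu> where "\<mu> = - d / (2 * c)"
  define T :: "real^3^3" where "T = transpose (vector [P, X, \<mu> *\<^sub>R R])"
  have c0: "c \<noteq> 0"
    unfolding c_def using assms by (rule nondeg_conic_distinct_points_not_conjugate)
  have RMP: "R \<bullet> (M *v P) = c"
    unfolding c_def by (rule inner_symmetric_matrix_vector_mult[OF sym])
  have "d = det M * (X \<bullet> cross3 P R)"
    unfolding d_def X_def symmetric_matrix_vector_mult_cross3[OF sym] by simp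
  also have "X \<bullet> cross3 P R = - c\<^sup>2"
    unfolding X_def cross3_dot_cross3 using P R RMP
    by (simp add: on_conic_def inner_commute c_def power2_eq_square)
  finally have d0: "d \<noteq> 0"
    using dM c0 by simp
  have "det T = \<mu> * (P \<bullet> cross3 X R)"
    unfolding T_def det_transpose_vector by (simp add: cross_mult_right)
  also have "P \<bullet> cross3 X R = c\<^sup>2"
    unfolding X_def cross3_cross3_left using R RMP
    by (simp add: on_conic_def inner_commute c_def power2_eq_square)
  finally have "det T \<noteq> 0"
    using c0 d0 by (simp add: \<mu>_def)
  moreover have "T *v vector [1, 0, 0] = P"
    unfolding T_def transpose_vector_mult by simp
  moreover have "on_conic M (T *v v) \<longleftrightarrow> (v$2)\<^sup>2 = v$1 * v$3" for v
  proof -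
    have "T *v v = v$1 *\<^sub>R P + v$2 *\<^sub>R X + (\<mu> * v$3) *\<^sub>R R"
      unfolding T_def transpose_vector_mult by (simp add: mult.commute)
    then have "(T *v v) \<bullet> (M *v (T *v v)) = 2 * c * v$1 * (\<mu> * v$3) + d * (v$2)\<^sup>2"
      unfolding c_def d_def X_def using quadratic_form_pole_frame[OF sym P R] by simp
    also have "\<dots> = d * ((v$2)\<^sup>2 - v$1 * v$3)"
      using c0 by (simp add: \<mu>_def algebra_simps)
    finally show ?thesis
      using d0 by (simp add: on_conic_def)
  qed
  ultimately show ?thesis
    using that invertible_det_nz by blast
qed

definition veronese :: "real \<Rightarrow> real^3" where
  "veronese t = vector [t\<^sup>2, t, 1]"

lemma standard_conic_eq_veronese:
  fixes v :: "real^3"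
  assumes conic: "(v$2)\<^sup>2 = v$1 * v$3" and v: "\<not> same_point v (vector [1, 0, 0])"
  shows "v = v$3 *\<^sub>R veronese (v$2 / v$3)"
proof -
  have "v$3 \<noteq> 0"
  proof
    assume "v$3 = 0"
    with conic have "v$2 = 0" by simp
    with \<open>v$3 = 0\<close> v show False
      by (simp add: same_point_def cross3_def vec_eq_iff forall_3)
  qed
  with conic show ?thesis
    by (simp add: veronese_def vec_eq_iff forall_3 power2_eq_square field_simps)
qed

lemma nondeg_conic_rational_parametrization:
  assumes "nondeg_conic M" "on_conic M P" "on_conic M R" "\<not> same_point P R"
  obtains T where "P = T *v vector [1, 0, 0]"
    "\<And>p. on_conic M p \<Longrightarrow> \<not> same_point p P \<Longrightarrow> \<exists>\<alpha> t. p = \<alpha> *\<^sub>R (T *v veronese t)"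
proof -
  obtain T where T: "invertible T" and P: "T *v vector [1, 0, 0] = P"
    and std: "\<And>v :: real^3. on_conic M (T *v v) \<longleftrightarrow> (v$2)\<^sup>2 = v$1 * v$3"
    using nondeg_conic_normal_form[OF assms] by blast
  have "\<exists>\<alpha> t. p = \<alpha> *\<^sub>R (T *v veronese t)" if p: "on_conic M p" "\<not> same_point p P" for p
  proof -
    have "surj ((*v) T)"
      using T matrix_right_invertible_surjective unfolding invertible_def by blast
    then obtain v where v: "p = T *v v"
      by (metis surj_def)
    have "\<not> same_point v (vector [1, 0, 0])"
      using p(2) unfolding v same_point_def P[symmetric] cross3_matrix_vector_mult by auto
    then have "v = v$3 *\<^sub>R veronese (v$2 / v$3)"
      using p(1) std v by (blast intro: standard_conic_eq_veronese)
    then have "p = v$3 *\<^sub>R (T *v veronese (v$2 / v$3))"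
      by (metis v matrix_vector_mult_scaleR)
    then show ?thesis by blast
  qed
  with P that show ?thesis by metis
qed

definition Q_lines_det :: "(nat \<Rightarrow> real^3) \<Rightarrow> (nat \<Rightarrow> real^3) \<Rightarrow> real" where
  "Q_lines_det A B =
     join (Qpt A B 1 2 3) (Qpt A B 2 1 3) \<bullet>
       cross3 (join (Qpt A B 1 3 2) (Qpt A B 3 1 2)) (join (Qpt A B 2 3 1) (Qpt A B 3 2 1))"

lemma Q_lines_det_matrix_image:
  assumes "\<And>i. i \<in> {1, 2, 3} \<Longrightarrow> A i = \<alpha> i *\<^sub>R (T *v a i) \<and> B i = \<beta> i *\<^sub>R (T *v b i)"
  obtains c where "Q_lines_det A B = c * Q_lines_det a b"
proof -
  have join: "join (s *\<^sub>R (S *v x)) (t *\<^sub>R (S *v y)) = (s * t) *\<^sub>R (cofactor_matrix S *v join x y)"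
    for s t S x y
    by (simp add: join_def cross_mult_left cross_mult_right cross3_matrix_vector_mult)
  have triple: "(r *\<^sub>R (S *v x)) \<bullet> cross3 (s *\<^sub>R (S *v y)) (t *\<^sub>R (S *v z))
      = (r * s * t * det S) * (x \<bullet> cross3 y z)" for r s t S x y z
    by (simp add: cross_mult_left cross_mult_right dot_cross3_matrix_vector_mult)
  define T' where "T' = cofactor_matrix (cofactor_matrix T)"
  have Q: "Qpt A B i j k = (\<alpha> i * \<beta> k * (\<beta> j * \<alpha> k)) *\<^sub>R (T' *v Qpt a b i j k)"
    if "i \<in> {1, 2, 3}" "j \<in> {1, 2, 3}" "k \<in> {1, 2, 3}" for i j k
    using assms[OF that(1)] assms[OF that(2)] assms[OF that(3)]
    by (simp only: Qpt_def meet_def join_def[symmetric] join T'_def)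
  show ?thesis
    by (rule that, simp only: Q_lines_det_def Q join triple insert_iff simp_thms)
qed

lemma Q_lines_det_veronese:
  "Q_lines_det ((\<lambda>i. veronese (a i))(1 := vector [1, 0, 0])) (\<lambda>i. veronese (b i)) = 0"
  unfolding Q_lines_det_def Qpt_def join_def meet_def
  by (simp add: veronese_def cross3_def inner_vec_def sum_3) algebra

lemma concurrent_if_dot_cross3_eq_0:
  assumes "l \<bullet> cross3 m n = 0"
  shows "concurrent l m n"
proof -
  let ?N = "vector [l, m, n] :: real^3^3"
  have "\<not> invertible ?N"
    using assms by (simp add: invertible_det_nz dot_cross_det)
  then obtain p where p: "?N *v p = 0" "p \<noteq> 0"
    using invertible_left_inverse matrix_left_invertible_ker by blast
  then have "l \<bullet> p = 0" "m \<bullet> p = 0" "n \<bullet> p = 0"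
    by (simp_all add: matrix_vector_mult_def vec_eq_iff forall_3 inner_vec_def)
  with p(2) show ?thesis
    unfolding concurrent_def proj_point_def incident_def by (metis inner_commute)
qed

theorem theorem2:
  fixes A B :: "nat \<Rightarrow> real^3" and M :: "real^3^3"
  assumes conic: "nondeg_conic M"
    and pts: "\<And>i. i \<in> {1,2,3} \<Longrightarrow> proj_point (A i) \<and> proj_point (B i)"
    and on: "\<And>i. i \<in> {1,2,3} \<Longrightarrow> on_conic M (A i) \<and> on_conic M (B i)"
    and distA: "\<And>i j. i \<in> {1,2,3} \<Longrightarrow> j \<in> {1,2,3} \<Longrightarrow> i \<noteq> j \<Longrightarrow> \<not> same_point (A i) (A j)"
    and distB: "\<And>i j. i \<in> {1,2,3} \<Longrightarrow> j \<in> {1,2,3} \<Longrightarrow> i \<noteq> j \<Longrightarrow> \<not> same_point (B i) (B j)"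
    and distAB: "\<And>i j. i \<in> {1,2,3} \<Longrightarrow> j \<in> {1,2,3} \<Longrightarrow> \<not> same_point (A i) (B j)"
    and gen12: "\<not> same_point (Qpt A B 1 2 3) (Qpt A B 2 1 3)"
    and gen13: "\<not> same_point (Qpt A B 1 3 2) (Qpt A B 3 1 2)"
    and gen23: "\<not> same_point (Qpt A B 2 3 1) (Qpt A B 3 2 1)"
  shows "concurrent (join (Qpt A B 1 2 3) (Qpt A B 2 1 3))
                    (join (Qpt A B 1 3 2) (Qpt A B 3 1 2))
                    (join (Qpt A B 2 3 1) (Qpt A B 3 2 1))"
  \<comment> \<open>The determinant vanishes identically.\<close>
proof -
  obtain T where A1: "A 1 = T *v vector [1, 0, 0]"
    and param: "\<And>p. on_conic M p \<Longrightarrow> \<not> same_point p (A 1) \<Longrightarrow> \<exists>\<alpha> t. p = \<alpha> *\<^sub>R (T *v veronese t)"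
    using nondeg_conic_rational_parametrization[OF conic _ _ distAB[of 1 3]] on by auto
  have "\<forall>i \<in> {2, 3}. \<exists>\<alpha> t. A i = \<alpha> *\<^sub>R (T *v veronese t)"
    using param on distA[of _ 1] by auto
  then obtain \<alpha> a where A: "\<And>i. i \<in> {2, 3} \<Longrightarrow> A i = \<alpha> i *\<^sub>R (T *v veronese (a i))"
    by metis
  have "\<forall>i \<in> {1, 2, 3}. \<exists>\<beta> t. B i = \<beta> *\<^sub>R (T *v veronese t)"
    using param on distAB[of 1] by (auto simp: same_point_def cross_skew[of "B _"])
  then obtain \<beta> b where B: "\<And>i. i \<in> {1, 2, 3} \<Longrightarrow> B i = \<beta> i *\<^sub>R (T *v veronese (b i))"
    by metis
  define a' where "a' = (\<lambda>i. veronese (a i))(1 := vector [1, 0, 0])"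
  define b' where "b' = (\<lambda>i. veronese (b i))"
  have "A i = (\<alpha>(1 := 1)) i *\<^sub>R (T *v a' i) \<and> B i = \<beta> i *\<^sub>R (T *v b' i)"
    if "i \<in> {1, 2, 3}" for i
    using that A1 A B by (auto simp: a'_def b'_def)
  then obtain c where "Q_lines_det A B = c * Q_lines_det a' b'"
    by (rule Q_lines_det_matrix_image)
  then have "Q_lines_det A B = 0"
    by (simp only: a'_def b'_def Q_lines_det_veronese mult_zero_right)
  then show ?thesis
    unfolding Q_lines_det_def by (rule concurrent_if_dot_cross3_eq_0)
qed

end
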